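(* Fix $\theta\in\mathcal C$, $\lambda>0$, $\alpha\in(0,1]$, and $p\in[1,\infty]$. Then the BK metric space $(\mathcal X,\beta^{BK}_{\theta,\lambda,p,\alpha})$ is isometric to the $\ell^p$ wedge $\mathcal C\vee_p\mathcal Y$ of the pointed metric spaces $(\mathcal C,\beta,\theta)$ and $(\mathcal Y,d_{\mathrm{reg}},\ast)$, via the identification $J:\mathcal X\to \mathcal C\vee_p\mathcal Y$ that is the identity on $\mathcal C\subseteq\mathcal X$ and on $\mathcal X\setminus\mathcal C\subseteq\mathcal Y$. Equivalently, for all $\phi,\psi\in\mathcal X$: $\beta^{BK}_{\theta,\lambda,p,\alpha}(\phi,\psi)=\beta(\phi,\psi)$ if $\phi,\psi\in\mathcal C$; $=\lambda\,\delta_{\mathrm{reg}}(\phi,\psi)^\alpha$ if $\phi,\psi\notin\mathcal C$; $=\|(\beta(\phi,\theta),\lambda\rho(\psi)^\alpha)\|_{\ell^p}$ if $\phi\in\mathcal C$, $\psi\notin\mathcal C$; and $=\|(\beta(\psi,\theta),\lambda\rho(\phi)^\alpha)\|_{\ell^p}$ if $\psi\in\mathcal C$, $\phi\notin\mathcal C$.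
   Context: Let $A$ be a unital $C^*$-algebra, $H$ a Hilbert space, $\mathcal X=\mathrm{CB}(A,B(H))$, $\mathcal C=\mathrm{CP}(A,B(H))$, $\beta$ the Bures distance on $\mathcal C$, $\delta_{\mathrm{reg}}$ the regular-representation metric on $\mathcal X$, and $\rho(\phi)=\delta_{\mathrm{reg}}(\phi,0)$. The BK metric is $\beta^{BK}_{\theta,\lambda,p,\alpha}(\phi,\psi)=\bigl\|\bigl(\|\kappa_\theta(\phi)-\kappa_\theta(\psi)\|_\infty,\ \lambda\,\widetilde\delta_{\mathrm{reg}}(\phi,\psi)^\alpha\bigr)\bigr\|_{\ell^p(\mathbb R^2)}$, with $\kappa_\theta(\phi)(\eta)=\beta(\phi,\eta)-\beta(\theta,\eta)$ ($\eta\in\mathcal C$) for $\phi\in\mathcal C$, $\kappa_\theta(\phi)=0$ for $\phi\notin\mathcal C$, and $\widetilde\delta_{\mathrm{reg}}$ equal to $0$ on $\mathcal C\times\mathcal C$, to $\rho$ of the non-CP point on mixed pairs, and to $\delta_{\mathrm{reg}}$ on non-CP pairs. $\mathcal Y=(\mathcal X\setminus\mathcal C)\sqcup\{\ast\}$ with metric $d_{\mathrm{reg}}(x,y)=\lambda\delta_{\mathrm{reg}}(x,y)^\alpha$ for $x,y\notin\mathcal C$, $d_{\mathrm{reg}}(x,\ast)=\lambda\rho(x)^\alpha$, $d_{\mathrm{reg}}(\ast,\ast)=0$. For pointed metric spaces $(M_1,d_1,m_0)$, $(M_2,d_2,n_0)$, the $\ell^p$ wedge $M_1\vee_pM_2$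 is $M_1\sqcup M_2$ with $m_0\sim n_0$, metric $d_1$ on $M_1$, $d_2$ on $M_2$, and $\|(d_1(x,m_0),d_2(y,n_0))\|_{\ell^p}$ for $x\in M_1$, $y\in M_2$. *)

theory Defs
  imports "HOL-Analysis.Analysis" "HOL-Library.Extended_Real"
begin

text \<open>The ambient space X = CB(A,B(H)) is an arbitrary set X,
  the cone C = CP(A,B(H)) a subset, beta (Bures distance) a metric on C,
  delta (regular-representation metric) a metric on X, z the zero map (z in C).\<close>

definition metric_on :: "'x set \<Rightarrow> ('x \<Rightarrow> 'x \<Rightarrow> real) \<Rightarrow> bool" where
  "metric_on S d \<longleftrightarrow>
     (\<forall>x\<in>S. \<forall>y\<in>S. 0 \<le> d x y \<and> d x y = d y x \<and> (d x y = 0 \<longleftrightarrow> x = y)) \<and>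
     (\<forall>x\<in>S. \<forall>y\<in>S. \<forall>w\<in>S. d x w \<le> d x y + d y w)"

definition lp_norm2 :: "ereal \<Rightarrow> real \<Rightarrow> real \<Rightarrow> real" where
  "lp_norm2 p a b =
     (if p = \<infinity> then max \<bar>a\<bar> \<bar>b\<bar>
      else (\<bar>a\<bar> powr real_of_ereal p + \<bar>b\<bar> powr real_of_ereal p) powr (1 / real_of_ereal p))"

definition sup_norm_on :: "'x set \<Rightarrow> ('x \<Rightarrow> real) \<Rightarrow> real" where
  "sup_norm_on C f = (SUP \<eta>\<in>C. \<bar>f \<eta>\<bar>)"

definition kappa :: "'x set \<Rightarrow> ('x \<Rightarrow> 'x \<Rightarrow> real) \<Rightarrow> 'x \<Rightarrow> 'x \<Rightarrow> 'x \<Rightarrow> real" where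
  "kappa C beta \<theta> \<phi> = (\<lambda>\<eta>. if \<phi> \<in> C then beta \<phi> \<eta> - beta \<theta> \<eta> else 0)"

definition rho :: "('x \<Rightarrow> 'x \<Rightarrow> real) \<Rightarrow> 'x \<Rightarrow> 'x \<Rightarrow> real" where
  "rho delta z \<phi> = delta \<phi> z"

definition delta_tilde :: "'x set \<Rightarrow> ('x \<Rightarrow> 'x \<Rightarrow> real) \<Rightarrow> 'x \<Rightarrow> 'x \<Rightarrow> 'x \<Rightarrow> real" where
  "delta_tilde C delta z \<phi> \<psi> =
     (if \<phi> \<in> C \<and> \<psi> \<in> C then 0
      else if \<phi> \<in> C then rho delta z \<psi>
      else if \<psi> \<in> C then rho delta z \<phi>
      else delta \<phi> \<psi>)"

definition bk_metric ::
  "'x set \<Rightarrow> ('x \<Rightarrow> 'x \<Rightarrow> real) \<Rightarrow> ('x \<Rightarrow> 'x \<Rightarrow> real) \<Rightarrow> 'x \<Rightarrow>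
   'x \<Rightarrow> real \<Rightarrow> ereal \<Rightarrow> real \<Rightarrow> 'x \<Rightarrow> 'x \<Rightarrow> real" where
  "bk_metric C beta delta z \<theta> lam p \<alpha> \<phi> \<psi> =
     lp_norm2 p
       (sup_norm_on C (\<lambda>\<eta>. kappa C beta \<theta> \<phi> \<eta> - kappa C beta \<theta> \<psi> \<eta>))
       (lam * delta_tilde C delta z \<phi> \<psi> powr \<alpha>)"

text \<open>The space Y = (X - C) disjoint-union {*}: Some x for x in X - C, None for *.\<close>
definition Y_space :: "'x set \<Rightarrow> 'x set \<Rightarrow> 'x option set" where
  "Y_space X C = Some ` (X - C) \<union> {None}"

definition d_reg :: "('x \<Rightarrow> 'x \<Rightarrow> real) \<Rightarrow> 'x \<Rightarrow> real \<Rightarrow> real \<Rightarrow> 'x option \<Rightarrow> 'x option \<Rightarrow> real" where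
  "d_reg delta z lam \<alpha> u v =
     (case (u, v) of
        (Some x, Some y) \<Rightarrow> lam * delta x y powr \<alpha>
      | (Some x, None) \<Rightarrow> lam * rho delta z x powr \<alpha>
      | (None, Some y) \<Rightarrow> lam * rho delta z y powr \<alpha>
      | (None, None) \<Rightarrow> 0)"

text \<open>l^p wedge of pointed metric spaces (M1,d1,m0), (M2,d2,n0): carrier
  Inl ` M1 \<union> Inr ` M2 with Inl m0 and Inr n0 identified (they are at distance 0
  under the metric below, which therefore descends to the quotient).\<close>
definition wedge_carrier :: "'a set \<Rightarrow> 'b set \<Rightarrow> ('a + 'b) set" where
  "wedge_carrier M1 M2 = Inl ` M1 \<union> Inr ` M2"

definition wedge_dist ::
  "ereal \<Rightarrow> ('a \<Rightarrow> 'a \<Rightarrow> real) \<Rightarrow> 'a \<Rightarrow> ('b \<Rightarrow> 'b \<Rightarrow> real) \<Rightarrow> 'b \<Rightarrow> ('a + 'b) \<Rightarrow> ('a + 'b) \<Rightarrow> real" where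
  "wedge_dist p d1 m0 d2 n0 u v =
     (case (u, v) of
        (Inl x, Inl y) \<Rightarrow> d1 x y
      | (Inr x, Inr y) \<Rightarrow> d2 x y
      | (Inl x, Inr y) \<Rightarrow> lp_norm2 p (d1 x m0) (d2 y n0)
      | (Inr x, Inl y) \<Rightarrow> lp_norm2 p (d1 y m0) (d2 x n0))"

definition J_map :: "'x set \<Rightarrow> 'x \<Rightarrow> 'x + 'x option" where
  "J_map C \<phi> = (if \<phi> \<in> C then Inl \<phi> else Inr (Some \<phi>))"

end

theory Submission
  imports Defs
begin

text \<open>
  For \<open>\<phi> \<in> C\<close> the function \<open>\<kappa>\<^sub>\<theta>(\<phi>)\<close> is the Kuratowski embedding of \<open>\<phi>\<close> shifted by that of
  \<open>\<theta>\<close>, and for \<open>\<phi> \<notin> C\<close> it is \<open>0\<close>, the shifted embedding of \<open>\<theta>\<close> itself. Hence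
  \<open>\<kappa>\<^sub>\<theta>\<close> factors through the retraction of \<open>X\<close> onto \<open>C\<close> collapsing \<open>X - C\<close> to \<open>\<theta>\<close>, and
  since the Kuratowski embedding is isometric, the first coordinate of the BK metric is the
  Bures distance of the retracted points. The second coordinate vanishes on \<open>C \<times> C\<close> and the
  first one on \<open>(X - C) \<times> (X - C)\<close>, so in these cases the \<open>\<ell>\<^sup>p\<close>-norm reduces to a single
  coordinate; on mixed pairs it is literally the wedge distance.
\<close>

lemma metric_on_nonneg: "metric_on S d \<Longrightarrow> x \<in> S \<Longrightarrow> y \<in> S \<Longrightarrow> 0 \<le> d x y"
  and metric_on_commute: "metric_on S d \<Longrightarrow> x \<in> S \<Longrightarrow> y \<in> S \<Longrightarrow> d x y = d y x"
  and metric_on_self: "metric_on S d \<Longrightarrow> x \<in> S \<Longrightarrow> d x x = 0"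
  and metric_on_triangle: "metric_on S d \<Longrightarrow> x \<in> S \<Longrightarrow> y \<in> S \<Longrightarrow> w \<in> S \<Longrightarrow> d x w \<le> d x y + d y w"
  unfolding metric_on_def by blast+

lemma SUP_abs_dist_diff_eq_dist:
  assumes d: "metric_on S d" and a: "a \<in> S" and b: "b \<in> S"
  shows "(SUP \<eta>\<in>S. \<bar>d a \<eta> - d b \<eta>\<bar>) = d a b"
proof (rule cSup_eq_maximum)
  have "\<bar>d a b - d b b\<bar> = d a b"
    using metric_on_self[OF d b] metric_on_nonneg[OF d a b] by simp
  then show "d a b \<in> (\<lambda>\<eta>. \<bar>d a \<eta> - d b \<eta>\<bar>) ` S"
    using b by (intro rev_image_eqI[of b]) simp_all
next
  have "\<bar>d a \<eta> - d b \<eta>\<bar> \<le> d a b" if \<eta>: "\<eta> \<in> S" for \<eta>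
    using metric_on_triangle[OF d a b \<eta>] metric_on_triangle[OF d b a \<eta>]
      metric_on_commute[OF d a b] by linarith
  then show "\<And>x. x \<in> (\<lambda>\<eta>. \<bar>d a \<eta> - d b \<eta>\<bar>) ` S \<Longrightarrow> x \<le> d a b"
    by blast
qed

lemma kappa_diff:
  "kappa C beta \<theta> \<phi> \<eta> - kappa C beta \<theta> \<psi> \<eta> =
     beta (if \<phi> \<in> C then \<phi> else \<theta>) \<eta> - beta (if \<psi> \<in> C then \<psi> else \<theta>) \<eta>"
  by (simp add: kappa_def)

lemma sup_norm_kappa_diff:
  assumes "metric_on C beta" "\<theta> \<in> C"
  shows "sup_norm_on C (\<lambda>\<eta>. kappa C beta \<theta> \<phi> \<eta> - kappa C beta \<theta> \<psi> \<eta>) =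
           beta (if \<phi> \<in> C then \<phi> else \<theta>) (if \<psi> \<in> C then \<psi> else \<theta>)"
  unfolding sup_norm_on_def kappa_diff
  using assms by (intro SUP_abs_dist_diff_eq_dist) auto

lemma lp_norm2_commute: "lp_norm2 p a b = lp_norm2 p b a"
  by (simp add: lp_norm2_def max.commute add.commute)

lemma lp_norm2_zero_right:
  assumes "1 \<le> p"
  shows "lp_norm2 p a 0 = \<bar>a\<bar>"
proof (cases p)
  case (real r)
  with assms have "1 \<le> r" by simp
  then show ?thesis
    using real by (simp add: lp_norm2_def powr_powr)
qed (use assms in \<open>simp_all add: lp_norm2_def\<close>)

lemma lp_norm2_zero_left: "1 \<le> p \<Longrightarrow> lp_norm2 p 0 b = \<bar>b\<bar>"
  by (subst lp_norm2_commute) (rule lp_norm2_zero_right)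

lemma bk_metric_cases:
  assumes beta: "metric_on C beta" and \<theta>: "\<theta> \<in> C" and lam: "0 \<le> lam" and p: "1 \<le> p"
  shows "bk_metric C beta delta z \<theta> lam p \<alpha> \<phi> \<psi> =
          (if \<phi> \<in> C \<and> \<psi> \<in> C then beta \<phi> \<psi>
           else if \<phi> \<notin> C \<and> \<psi> \<notin> C then lam * delta \<phi> \<psi> powr \<alpha>
           else if \<phi> \<in> C then lp_norm2 p (beta \<phi> \<theta>) (lam * rho delta z \<psi> powr \<alpha>)
           else lp_norm2 p (beta \<psi> \<theta>) (lam * rho delta z \<phi> powr \<alpha>))"
  using metric_on_nonneg[OF beta] metric_on_self[OF beta \<theta>] metric_on_commute[OF beta _ \<theta>]
    lam lp_norm2_zero_right[OF p] lp_norm2_zero_left[OF p]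
  by (simp add: bk_metric_def sup_norm_kappa_diff[OF beta \<theta>] delta_tilde_def)

lemma wedge_dist_J_map:
  "wedge_dist p beta \<theta> (d_reg delta z lam \<alpha>) None (J_map C \<phi>) (J_map C \<psi>) =
     (if \<phi> \<in> C \<and> \<psi> \<in> C then beta \<phi> \<psi>
      else if \<phi> \<notin> C \<and> \<psi> \<notin> C then lam * delta \<phi> \<psi> powr \<alpha>
      else if \<phi> \<in> C then lp_norm2 p (beta \<phi> \<theta>) (lam * rho delta z \<psi> powr \<alpha>)
      else lp_norm2 p (beta \<psi> \<theta>) (lam * rho delta z \<phi> powr \<alpha>))"
  by (simp add: wedge_dist_def J_map_def d_reg_def)

lemma J_map_image_wedge_carrier:
  "C \<subseteq> X \<Longrightarrow> J_map C ` X \<union> {Inr None} = wedge_carrier C (Y_space X C)"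
  by (auto simp: J_map_def wedge_carrier_def Y_space_def image_iff)

theorem theorem5p5:
  fixes X C :: "'x set"
    and beta delta :: "'x \<Rightarrow> 'x \<Rightarrow> real"
    and z \<theta> :: 'x
    and lam \<alpha> :: real
    and p :: ereal
  assumes CX: "C \<subseteq> X"
    and beta_metric: "metric_on C beta"
    and delta_metric: "metric_on X delta"
    and zero_CP: "z \<in> C"
    and theta: "\<theta> \<in> C"
    and lam: "lam > 0"
    and alpha: "0 < \<alpha>" "\<alpha> \<le> 1"
    and p: "1 \<le> p"
  shows
    "(\<forall>\<phi>\<in>X. \<forall>\<psi>\<in>X.
        bk_metric C beta delta z \<theta> lam p \<alpha> \<phi> \<psi> =
        wedge_dist p beta \<theta> (d_reg delta z lam \<alpha>) None (J_map C \<phi>) (J_map C \<psi>))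
     \<and> J_map C ` X \<union> {Inr None} = wedge_carrier C (Y_space X C)
     \<and> (\<forall>\<phi>\<in>X. \<forall>\<psi>\<in>X.
        bk_metric C beta delta z \<theta> lam p \<alpha> \<phi> \<psi> =
          (if \<phi> \<in> C \<and> \<psi> \<in> C then beta \<phi> \<psi>
           else if \<phi> \<notin> C \<and> \<psi> \<notin> C then lam * delta \<phi> \<psi> powr \<alpha>
           else if \<phi> \<in> C then lp_norm2 p (beta \<phi> \<theta>) (lam * rho delta z \<psi> powr \<alpha>)
           else lp_norm2 p (beta \<psi> \<theta>) (lam * rho delta z \<phi> powr \<alpha>)))"
  unfolding bk_metric_cases[OF beta_metric theta less_imp_le[OF lam] p]
    wedge_dist_J_map J_map_image_wedge_carrier[OF CX]
  by simp

end
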